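(* Every nonempty sibling $\sigma_d$-invariant lamination $\mathcal L$ contains a chief, i.e. a sublamination which is a nonempty sibling $\sigma_d$-invariant lamination minimal by inclusion among such.
   Context: $\mathbb S$ is the unit circle, $\sigma_d(z)=z^d$, $d\ge2$. A chord $\overline{ab}$ joins $a,b\in\mathbb S$; distinct chords cross if they meet in the open unit disk; a chord is critical if $a\ne b$ and $\sigma_d(a)=\sigma_d(b)$. A lamination is a family of pairwise non-crossing chords (leaves) containing all points of $\mathbb S$, whose union is closed; it is sibling $\sigma_d$-invariant if (1) images of leaves are leaves; (2) every leaf is the image of a leaf; (3) every non-critical leaf $\ell$ belongs to $d$ pairwise disjoint leaves $\ell_1=\ell,\dots,\ell_d$ with equal images. Nonempty means having a nondegenerate leaf. *)

theory Defs
  imports "HOL-Analysis.Analysis"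
begin

text \<open>A chord is represented by its set of endpoints {a,b} with a, b on the unit
circle (a = b gives a degenerate chord, i.e. a point of the circle).\<close>

definition sigma :: "nat \<Rightarrow> complex \<Rightarrow> complex" where
  "sigma d z = z ^ d"

definition is_chord :: "complex set \<Rightarrow> bool" where
  "is_chord c \<longleftrightarrow> (\<exists>a b. a \<in> sphere 0 1 \<and> b \<in> sphere 0 1 \<and> c = {a, b})"

definition seg :: "complex set \<Rightarrow> complex set" where
  "seg c = convex hull c"

definition crosses :: "complex set \<Rightarrow> complex set \<Rightarrow> bool" where
  "crosses c1 c2 \<longleftrightarrow> c1 \<noteq> c2 \<and> seg c1 \<inter> seg c2 \<inter> ball 0 1 \<noteq> {}"

definition critical :: "nat \<Rightarrow> complex set \<Rightarrow> bool" where
  "critical d c \<longleftrightarrow> (\<exists>a b. c = {a, b} \<and> a \<noteq> b \<and> sigma d a = sigma d b)"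

definition lamination :: "complex set set \<Rightarrow> bool" where
  "lamination L \<longleftrightarrow>
     (\<forall>l\<in>L. is_chord l) \<and>
     (\<forall>l1\<in>L. \<forall>l2\<in>L. \<not> crosses l1 l2) \<and>
     (\<forall>z\<in>sphere 0 1. {z} \<in> L) \<and>
     closed (\<Union>l\<in>L. seg l)"

definition sibling_invariant :: "nat \<Rightarrow> complex set set \<Rightarrow> bool" where
  "sibling_invariant d L \<longleftrightarrow>
     (\<forall>l\<in>L. sigma d ` l \<in> L) \<and>
     (\<forall>l\<in>L. \<exists>l'\<in>L. sigma d ` l' = l) \<and>
     (\<forall>l\<in>L. \<not> critical d l \<longrightarrow>
        (\<exists>f :: nat \<Rightarrow> complex set. f 1 = l \<and>
           (\<forall>i\<in>{1..d}. f i \<in> L \<and> sigma d ` (f i) = sigma d ` l) \<and>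
           (\<forall>i\<in>{1..d}. \<forall>j\<in>{1..d}. i \<noteq> j \<longrightarrow> seg (f i) \<inter> seg (f j) = {})))"

definition nonempty_lam :: "complex set set \<Rightarrow> bool" where
  "nonempty_lam L \<longleftrightarrow> (\<exists>l\<in>L. card l = 2)"

definition good_lam :: "nat \<Rightarrow> complex set set \<Rightarrow> bool" where
  "good_lam d L \<longleftrightarrow> lamination L \<and> sibling_invariant d L \<and> nonempty_lam L"

definition is_chief :: "nat \<Rightarrow> complex set set \<Rightarrow> complex set set \<Rightarrow> bool" where
  "is_chief d L C \<longleftrightarrow> C \<subseteq> L \<and> good_lam d C \<and>
     (\<forall>C'. C' \<subseteq> C \<and> good_lam d C' \<longrightarrow> C' = C)"

end

theory Submission
  imports Defs
begin

text \<open>Zorn's lemma applied downwards: the intersection of a nonempty chain of nonempty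
sibling invariant laminations is again one.  The invariance conditions pass to the
intersection because every preimage leaf or sibling family ranges over a finite set
determined by the given leaf, and a chain of nonempty subsets of a finite set has a common
element; closedness uses that a point of the open disk lies on at most one leaf.
Nondegeneracy survives because \<open>z \<mapsto> z^d\<close> expands short chords by a factor \<open>3/2\<close>, so every
member of the chain has a leaf of length at least \<open>1/(2d\<^sup>2)\<close>; the midpoints of such leaves
lie in a fixed compact subdisk, and compactness yields a point of the open disk lying on a
leaf of every member, hence on a common nondegenerate leaf.\<close>

lemma subset_Zorn_Inter:
  assumes "\<A> \<noteq> {}" and chain_Inter: "\<And>\<C>. \<lbrakk>\<C> \<noteq> {}; subset.chain \<A> \<C>\<rbrakk> \<Longrightarrow> \<Inter>\<C> \<in> \<A>"
  shows "\<exists>M\<in>\<A>. \<forall>X\<in>\<A>. X \<subseteq> M \<longrightarrow> X = M"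
proof -
  have "\<exists>M\<in>uminus ` \<A>. \<forall>X\<in>uminus ` \<A>. M \<subseteq> X \<longrightarrow> X = M"
  proof (rule subset_Zorn_nonempty)
    show "uminus ` \<A> \<noteq> {}" using assms(1) by simp
  next
    fix \<C> assume "\<C> \<noteq> {}" and "subset.chain (uminus ` \<A>) \<C>"
    then have "uminus ` \<C> \<noteq> {}" and "subset.chain \<A> (uminus ` \<C>)"
      unfolding subset_chain_def by (auto simp: image_iff)
    then have "\<Inter>(uminus ` \<C>) \<in> \<A>" by (rule chain_Inter)
    have "\<Union>\<C> = - \<Inter>(uminus ` \<C>)" by auto
    then show "\<Union>\<C> \<in> uminus ` \<A>" using \<open>\<Inter>(uminus ` \<C>) \<in> \<A>\<close> by (rule image_eqI)
  qed
  then obtain M where "M \<in> \<A>" and "\<forall>X\<in>uminus ` \<A>. - M \<subseteq> X \<longrightarrow> X = - M"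
    by (blast dest: bex_imageD)
  then show ?thesis by (auto dest: ball_imageD)
qed

lemma chain_common_witness:
  assumes "finite S" and "K \<noteq> {}" and chain: "subset.chain \<A> K"
    and witness: "\<And>C. C \<in> K \<Longrightarrow> \<exists>x\<in>S. P x C"
    and mono: "\<And>x C C'. C \<subseteq> C' \<Longrightarrow> P x C \<Longrightarrow> P x C'"
  shows "\<exists>x\<in>S. \<forall>C\<in>K. P x C"
proof -
  define F where "F C = {x\<in>S. P x C}" for C
  have "F C1 \<subseteq> F C2 \<or> F C2 \<subseteq> F C1" if "C1 \<in> K" "C2 \<in> K" for C1 C2
  proof -
    have "C1 \<subseteq> C2 \<or> C2 \<subseteq> C1" using chain that unfolding subset_chain_def by blast
    then show ?thesis unfolding F_def using mono by blast
  qed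
  then have "subset.chain UNIV (F ` K)" unfolding subset_chain_def by auto
  moreover have "finite (F ` K)"
    by (rule finite_subset[of _ "Pow S"]) (use \<open>finite S\<close> in \<open>auto simp: F_def\<close>)
  moreover have "F ` K \<noteq> {}" using \<open>K \<noteq> {}\<close> by simp
  ultimately have "\<Inter>(F ` K) \<in> F ` K" using Inter_in_chain by blast
  then obtain C where "C \<in> K" and "\<Inter>(F ` K) = F C" by (rule imageE) simp
  moreover obtain x where "x \<in> F C" using witness[OF \<open>C \<in> K\<close>] unfolding F_def by auto
  ultimately have "x \<in> S" and "\<forall>C'\<in>K. x \<in> F C'" unfolding F_def by auto
  then show ?thesis unfolding F_def by auto
qed

lemma finite_sigma_vimage: "finite A \<Longrightarrow> d > 0 \<Longrightarrow> finite {z. sigma d z \<in> A}"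
proof -
  assume "finite A" "d > 0"
  then have "finite (\<Union>w\<in>A. {z::complex. z ^ d = w})" by (intro finite_UN_I) auto
  moreover have "{z. sigma d z \<in> A} = (\<Union>w\<in>A. {z. z ^ d = w})" by (auto simp: sigma_def)
  ultimately show ?thesis by simp
qed

lemma chord_norm: "is_chord l \<Longrightarrow> z \<in> l \<Longrightarrow> norm z = 1"
  unfolding is_chord_def by auto

lemma finite_chord: "is_chord l \<Longrightarrow> finite l"
  unfolding is_chord_def by auto

lemma seg_subset_cball: "is_chord l \<Longrightarrow> seg l \<subseteq> cball 0 1"
  unfolding seg_def by (rule hull_minimal) (auto dest: chord_norm)

lemma seg_singleton [simp]: "seg {z} = {z}"
  by (simp add: seg_def)

lemma lamination_leaf_unique:
  assumes "lamination C" "l1 \<in> C" "l2 \<in> C" "p \<in> seg l1" "p \<in> seg l2" "norm p < 1"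
  shows "l1 = l2"
proof (rule ccontr)
  assume "l1 \<noteq> l2"
  then have "crosses l1 l2" using assms(4-6) unfolding crosses_def by auto
  then show False using assms(1-3) unfolding lamination_def by blast
qed

lemma chain_common_leaf:
  assumes "subset.chain (Collect lamination) K" and "C0 \<in> K" and "norm p < 1"
    and through_p: "\<And>C. C \<in> K \<Longrightarrow> \<exists>l\<in>C. p \<in> seg l"
  shows "\<exists>l\<in>\<Inter>K. p \<in> seg l"
proof -
  obtain l0 where l0: "l0 \<in> C0" "p \<in> seg l0" using through_p \<open>C0 \<in> K\<close> by blast
  have "l0 \<in> C" if "C \<in> K" for C
  proof (cases "C0 \<subseteq> C")
    case False
    with assms(1) \<open>C \<in> K\<close> \<open>C0 \<in> K\<close> have "C \<subseteq> C0" "lamination C0"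
      unfolding subset_chain_def by blast+
    moreover obtain l where "l \<in> C" "p \<in> seg l" using through_p \<open>C \<in> K\<close> by blast
    ultimately show ?thesis using lamination_leaf_unique[of C0 l l0 p] l0 \<open>norm p < 1\<close> by blast
  qed (use l0 in blast)
  then show ?thesis using l0 by blast
qed

lemma lamination_Inter_chain:
  assumes "K \<noteq> {}" and chain: "subset.chain (Collect lamination) K"
  shows "lamination (\<Inter>K)"
proof -
  obtain C0 where "C0 \<in> K" using \<open>K \<noteq> {}\<close> by blast
  have lam: "lamination C" if "C \<in> K" for C using chain that unfolding subset_chain_def by blast
  have points: "{z} \<in> \<Inter>K" if "z \<in> sphere 0 1" for z
    using lam that unfolding lamination_def by blast
  have "closure (\<Union>l\<in>\<Inter>K. seg l) \<subseteq> (\<Union>l\<in>\<Inter>K. seg l)"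
  proof
    fix p assume p: "p \<in> closure (\<Union>l\<in>\<Inter>K. seg l)"
    have through_p: "\<exists>l\<in>C. p \<in> seg l" if "C \<in> K" for C
    proof -
      have "closure (\<Union>l\<in>\<Inter>K. seg l) \<subseteq> (\<Union>l\<in>C. seg l)"
        using lam[OF that] \<open>C \<in> K\<close> unfolding lamination_def by (intro closure_minimal) blast+
      then show ?thesis using p by blast
    qed
    then obtain l where "l \<in> C0" "p \<in> seg l" using \<open>C0 \<in> K\<close> by blast
    then have "norm p \<le> 1"
      using lam[OF \<open>C0 \<in> K\<close>] seg_subset_cball unfolding lamination_def by fastforce
    then consider "norm p = 1" | "norm p < 1" by linarith
    then show "p \<in> (\<Union>l\<in>\<Inter>K. seg l)"
    proof cases
      case 1
      then have "{p} \<in> \<Inter>K" using points by simp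
      then show ?thesis by (metis UN_I seg_singleton singletonI)
    next
      case 2
      then show ?thesis using chain_common_leaf[OF chain \<open>C0 \<in> K\<close> _ through_p] by blast
    qed
  qed
  then have "closed (\<Union>l\<in>\<Inter>K. seg l)" by (simp add: closure_subset_eq)
  moreover have "\<Inter>K \<subseteq> C0" using \<open>C0 \<in> K\<close> by blast
  ultimately show ?thesis
    using lam[OF \<open>C0 \<in> K\<close>] points unfolding lamination_def by blast
qed

definition sibling_family :: "nat \<Rightarrow> complex set set \<Rightarrow> complex set \<Rightarrow> (nat \<Rightarrow> complex set) \<Rightarrow> bool" where
  "sibling_family d C l f \<longleftrightarrow> f 1 = l \<and>
     (\<forall>i\<in>{1..d}. f i \<in> C \<and> sigma d ` (f i) = sigma d ` l) \<and>
     (\<forall>i\<in>{1..d}. \<forall>j\<in>{1..d}. i \<noteq> j \<longrightarrow> seg (f i) \<inter> seg (f j) = {})"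

lemma sibling_invariant_iff:
  "sibling_invariant d C \<longleftrightarrow>
     (\<forall>l\<in>C. sigma d ` l \<in> C) \<and> (\<forall>l\<in>C. \<exists>l'\<in>C. sigma d ` l' = l) \<and>
     (\<forall>l\<in>C. \<not> critical d l \<longrightarrow> (\<exists>f. sibling_family d C l f))"
  unfolding sibling_invariant_def sibling_family_def ..

lemma sibling_invariant_imageD: "sibling_invariant d C \<Longrightarrow> l \<in> C \<Longrightarrow> sigma d ` l \<in> C"
  unfolding sibling_invariant_iff by blast

lemma sibling_invariant_preimageD:
  "sibling_invariant d C \<Longrightarrow> l \<in> C \<Longrightarrow> \<exists>l'\<in>C. sigma d ` l' = l"
  unfolding sibling_invariant_iff by blast

lemma sibling_invariant_familyD:
  "sibling_invariant d C \<Longrightarrow> l \<in> C \<Longrightarrow> \<not> critical d l \<Longrightarrow> \<exists>f. sibling_family d C l f"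
  unfolding sibling_invariant_iff by blast

lemma sibling_family_mono: "sibling_family d C l f \<Longrightarrow> C \<subseteq> C' \<Longrightarrow> sibling_family d C' l f"
  unfolding sibling_family_def by blast

lemma sibling_family_Inter:
  "K \<noteq> {} \<Longrightarrow> (\<And>C. C \<in> K \<Longrightarrow> sibling_family d C l f) \<Longrightarrow> sibling_family d (\<Inter>K) l f"
  unfolding sibling_family_def by blast

lemma sibling_family_restrict:
  assumes "sibling_family d C l f" and "d > 0"
  shows "sibling_family d C l (restrict f {1..d})"
    and "restrict f {1..d} \<in> {1..d} \<rightarrow>\<^sub>E Pow {z. sigma d z \<in> sigma d ` l}"
  using assms unfolding sibling_family_def by auto

lemma sibling_invariant_Inter_chain:
  assumes "d > 0" and "K \<noteq> {}" and chain: "subset.chain {C. lamination C \<and> sibling_invariant d C} K"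
  shows "sibling_invariant d (\<Inter>K)"
proof -
  obtain C0 where "C0 \<in> K" using \<open>K \<noteq> {}\<close> by blast
  have lam: "lamination C" and si: "sibling_invariant d C" if "C \<in> K" for C
    using chain that unfolding subset_chain_def by blast+
  have finite_leaf: "finite l" if "l \<in> \<Inter>K" for l
    using lam[OF \<open>C0 \<in> K\<close>] that \<open>C0 \<in> K\<close> finite_chord unfolding lamination_def by blast
  show ?thesis unfolding sibling_invariant_iff
  proof (intro conjI ballI impI)
    fix l assume "l \<in> \<Inter>K"
    then show "sigma d ` l \<in> \<Inter>K" using si sibling_invariant_imageD by blast
  next
    fix l assume l: "l \<in> \<Inter>K"
    have "\<exists>l'\<in>Pow {z. sigma d z \<in> l}. \<forall>C\<in>K. l' \<in> C \<and> sigma d ` l' = l"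
    proof (rule chain_common_witness[OF _ \<open>K \<noteq> {}\<close> chain])
      show "finite (Pow {z. sigma d z \<in> l})"
        using finite_sigma_vimage[OF finite_leaf[OF l] \<open>d > 0\<close>] by simp
      fix C assume "C \<in> K"
      moreover have "l \<in> C" using l \<open>C \<in> K\<close> by blast
      ultimately obtain l' where "l' \<in> C" "sigma d ` l' = l"
        using sibling_invariant_preimageD[OF si] by blast
      then show "\<exists>l'\<in>Pow {z. sigma d z \<in> l}. l' \<in> C \<and> sigma d ` l' = l" by blast
    qed blast
    then show "\<exists>l'\<in>\<Inter>K. sigma d ` l' = l" using \<open>K \<noteq> {}\<close> by blast
  next
    fix l assume l: "l \<in> \<Inter>K" and "\<not> critical d l"
    define S where "S = {1..d} \<rightarrow>\<^sub>E Pow {z. sigma d z \<in> sigma d ` l}"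
    have "\<exists>f\<in>S. \<forall>C\<in>K. sibling_family d C l f"
    proof (rule chain_common_witness[OF _ \<open>K \<noteq> {}\<close> chain])
      show "finite S" unfolding S_def
        using finite_sigma_vimage[OF finite_imageI[OF finite_leaf[OF l]] \<open>d > 0\<close>]
        by (intro finite_PiE) auto
      fix C assume "C \<in> K"
      moreover have "l \<in> C" using l \<open>C \<in> K\<close> by blast
      ultimately obtain f where "sibling_family d C l f"
        using sibling_invariant_familyD[OF si] \<open>\<not> critical d l\<close> by blast
      then show "\<exists>f\<in>S. sibling_family d C l f"
        unfolding S_def using sibling_family_restrict \<open>d > 0\<close> by blast
    qed (rule sibling_family_mono)
    then show "\<exists>f. sibling_family d (\<Inter>K) l f"
      using sibling_family_Inter[OF \<open>K \<noteq> {}\<close>] by blast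
  qed
qed

lemma unit_power_diff_ge:
  fixes a b :: complex
  assumes "norm a = 1" "norm b = 1" "d \<ge> 2" "norm (a - b) \<le> 1 / (2 * real d ^ 2)"
  shows "norm (a^d - b^d) \<ge> 3/2 * norm (a - b)"
proof -
  \<comment> \<open>Each term of \<open>S\<close> lies within \<open>d |a - b|\<close> of \<open>a^(d-1)\<close>, so \<open>|S - d a^(d-1)| \<le> d\<^sup>2 |a - b| \<le> 1/2\<close>.\<close>
  define S where "S = (\<Sum>i<d. b^(d - Suc i) * a^i)"
  have factor: "a^d - b^d = (a - b) * S" unfolding S_def by (simp add: power_diff_sumr2)
  have "norm (S - of_nat d * a^(d-1)) = norm (\<Sum>i<d. b^(d - Suc i) * a^i - a^(d - Suc i) * a^i)"
  proof -
    have "(\<Sum>i<d. a^(d - Suc i) * a^i) = (\<Sum>i<d. a^(d-1))"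
      by (intro sum.cong refl) (simp add: power_add[symmetric])
    then show ?thesis unfolding S_def by (simp add: sum_subtractf)
  qed
  also have "\<dots> \<le> (\<Sum>i<d. norm (b^(d - Suc i) * a^i - a^(d - Suc i) * a^i))"
    by (rule norm_sum)
  also have "\<dots> = (\<Sum>i<d. norm (b^(d - Suc i) - a^(d - Suc i)))"
    using assms(1) by (simp add: left_diff_distrib[symmetric] norm_mult norm_power)
  also have "\<dots> \<le> (\<Sum>i<d. real d * norm (a - b))"
  proof (rule sum_mono)
    fix i
    have "norm (b^(d - Suc i) - a^(d - Suc i)) \<le> real (d - Suc i) * norm (b - a)"
      using norm_power_diff[of b a] assms(1,2) by simp
    also have "\<dots> \<le> real d * norm (a - b)" by (simp add: norm_minus_commute mult_right_mono)
    finally show "norm (b^(d - Suc i) - a^(d - Suc i)) \<le> real d * norm (a - b)" .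
  qed
  also have "\<dots> = real d ^ 2 * norm (a - b)" by (simp add: power2_eq_square)
  also have "\<dots> \<le> 1/2"
    using mult_left_mono[OF assms(4), of "real d ^ 2"] assms(3) by simp
  finally have "norm (S - of_nat d * a^(d-1)) \<le> 1/2" .
  moreover have "norm (of_nat d * a^(d-1)) = d" using assms(1) by (simp add: norm_mult norm_power)
  ultimately have "norm S \<ge> 3/2"
    using norm_triangle_ineq2[of "of_nat d * a^(d-1)" S] assms(3) by (simp add: norm_minus_commute)
  then have "3/2 * norm (a - b) \<le> norm S * norm (a - b)" by (rule mult_right_mono) simp
  then show ?thesis unfolding factor norm_mult by (simp add: mult.commute)
qed

lemma good_lam_long_leaf:
  assumes "d \<ge> 2" and "good_lam d C"
  obtains a b where "{a, b} \<in> C" "norm a = 1" "norm b = 1" "norm (a - b) \<ge> 1 / (2 * real d ^ 2)"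
proof (rule ccontr)
  define \<delta> where "\<delta> = 1 / (2 * real d ^ 2)"
  note long = that
  assume "\<not> thesis"
  have short: "norm (a - b) < \<delta>" if "{a, b} \<in> C" "norm a = 1" "norm b = 1" for a b
    using long[OF that] \<open>\<not> thesis\<close> unfolding \<delta>_def by (meson not_le)
  define S where "S = {norm (a - b) | a b. {a, b} \<in> C \<and> norm a = 1 \<and> norm b = 1}"
  have chords: "\<forall>l\<in>C. is_chord l"
    using assms(2) unfolding good_lam_def lamination_def by blast
  have image: "sigma d ` l \<in> C" if "l \<in> C" for l
    using assms(2) that sibling_invariant_imageD unfolding good_lam_def by blast
  have "\<forall>x\<in>S. x \<le> \<delta>" using short unfolding S_def by (auto intro: less_imp_le)
  then have bdd: "bdd_above S" unfolding bdd_above_def by blast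
  obtain l where "l \<in> C" "card l = 2" using assms(2) unfolding good_lam_def nonempty_lam_def by blast
  then obtain a0 b0 where ab0: "{a0, b0} \<in> C" "a0 \<noteq> b0" by (auto simp: card_2_iff)
  then have "norm (a0 - b0) \<in> S" using chords chord_norm unfolding S_def by blast
  moreover have "0 < norm (a0 - b0)" using \<open>a0 \<noteq> b0\<close> by simp
  ultimately have "S \<noteq> {}" and "0 < Sup S"
    using cSup_upper[OF _ bdd, of "norm (a0 - b0)"] by (blast, linarith)
  then have "2/3 * Sup S < Sup S" by simp
  then obtain x where "x \<in> S" "2/3 * Sup S < x" using less_cSup_iff[OF \<open>S \<noteq> {}\<close> bdd] by blast
  then obtain a b where ab: "x = norm (a - b)" "{a, b} \<in> C" "norm a = 1" "norm b = 1"
    unfolding S_def by blast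
  \<comment> \<open>\<open>z \<mapsto> z^d\<close> would stretch the longest leaves beyond the supremum.\<close>
  have stretch: "3/2 * x \<le> norm (a^d - b^d)"
    using unit_power_diff_ge[OF ab(3,4) assms(1)] short[OF ab(2-4)] ab(1) unfolding \<delta>_def by simp
  have "{a^d, b^d} \<in> C" using image[OF ab(2)] unfolding sigma_def by simp
  moreover have "norm (a^d) = 1" "norm (b^d) = 1" using ab(3,4) by (simp_all add: norm_power)
  ultimately have "norm (a^d - b^d) \<in> S" unfolding S_def by blast
  then have "norm (a^d - b^d) \<le> Sup S" using cSup_upper[OF _ bdd] by blast
  with stretch \<open>2/3 * Sup S < x\<close> show False by linarith
qed

lemma norm_midpoint_unit_sq:
  fixes a b :: complex
  assumes "norm a = 1" "norm b = 1"
  shows "norm (midpoint a b) ^ 2 = 1 - norm (a - b) ^ 2 / 4"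
proof -
  have "norm (a + b)^2 + norm (a - b)^2 = 4"
    using dot_norm[of a b] dot_norm_neg[of a b] assms by simp
  moreover have "norm (midpoint a b) ^ 2 = norm (a + b) ^ 2 / 4"
    unfolding midpoint_def scaleR_conv_of_real by (simp add: norm_divide power_divide)
  ultimately show ?thesis by simp
qed

lemma good_lam_leaf_near_center:
  assumes "d \<ge> 2" and "good_lam d C"
  shows "\<exists>l\<in>C. \<exists>p\<in>seg l. norm p \<le> sqrt (1 - 1 / (16 * real d ^ 4))"
proof -
  obtain a b where ab: "{a, b} \<in> C" "norm a = 1" "norm b = 1" "norm (a - b) \<ge> 1 / (2 * real d ^ 2)"
    using good_lam_long_leaf[OF assms] .
  have "midpoint a b \<in> seg {a, b}"
    unfolding seg_def segment_convex_hull[symmetric] by (rule midpoint_in_closed_segment)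
  moreover have "(1 / (2 * real d ^ 2))^2 \<le> norm (a - b)^2" using ab(4) by (intro power_mono) auto
  then have "1 / (4 * real d ^ 4) \<le> norm (a - b)^2"
    by (simp add: power_divide power_mult_distrib flip: power_mult)
  then have "norm (midpoint a b) ^ 2 \<le> 1 - 1 / (16 * real d ^ 4)"
    using norm_midpoint_unit_sq[OF ab(2,3)] by simp
  then have "norm (midpoint a b) \<le> sqrt (1 - 1 / (16 * real d ^ 4))" by (rule real_le_rsqrt)
  ultimately show ?thesis using ab(1) by blast
qed

lemma chord_through_interior_nondegenerate:
  assumes "is_chord l" "p \<in> seg l" "norm p < 1"
  shows "card l = 2"
proof -
  obtain a b where ab: "norm a = 1" "norm b = 1" "l = {a, b}" using assms(1) unfolding is_chord_def by auto
  then have "a \<noteq> b" using assms(2,3) by auto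
  then show ?thesis using ab(3) by simp
qed

lemma nonempty_lam_Inter_chain:
  assumes "d \<ge> 2" and "K \<noteq> {}" and chain: "subset.chain {C. good_lam d C} K"
  shows "nonempty_lam (\<Inter>K)"
proof -
  obtain C0 where "C0 \<in> K" using \<open>K \<noteq> {}\<close> by blast
  have good: "good_lam d C" if "C \<in> K" for C using chain that unfolding subset_chain_def by blast
  have lam_chain: "subset.chain (Collect lamination) K"
    using chain unfolding subset_chain_def good_lam_def by blast
  define r where "r = sqrt (1 - 1 / (16 * real d ^ 4))"
  have "r < 1" using assms(1) unfolding r_def by simp
  define T where "T C = (\<Union>l\<in>C. seg l) \<inter> cball 0 r" for C
  have "\<Inter>(T ` K) \<noteq> {}"
  proof (rule compact_chain)
    fix S assume "S \<in> T ` K"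
    then show "compact S"
      using good unfolding T_def good_lam_def lamination_def by (auto intro: closed_Int_compact)
  next
    show "{} \<notin> T ` K"
      using good_lam_leaf_near_center[OF assms(1) good] unfolding T_def r_def by fastforce
  next
    fix S S' assume "S \<in> T ` K \<and> S' \<in> T ` K"
    then show "S \<subseteq> S' \<or> S' \<subseteq> S" using chain unfolding subset_chain_def T_def by blast
  qed
  then obtain p where p: "p \<in> \<Inter>(T ` K)" by blast
  then have "norm p < 1" using \<open>C0 \<in> K\<close> \<open>r < 1\<close> unfolding T_def by fastforce
  moreover have "\<exists>l\<in>C. p \<in> seg l" if "C \<in> K" for C using p that unfolding T_def by blast
  ultimately obtain l where "l \<in> \<Inter>K" "p \<in> seg l"
    using chain_common_leaf[OF lam_chain \<open>C0 \<in> K\<close>] by blast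
  moreover have "is_chord l"
    using good[OF \<open>C0 \<in> K\<close>] \<open>l \<in> \<Inter>K\<close> \<open>C0 \<in> K\<close> unfolding good_lam_def lamination_def by blast
  ultimately show ?thesis
    unfolding nonempty_lam_def using chord_through_interior_nondegenerate \<open>norm p < 1\<close> by blast
qed

lemma good_lam_Inter_chain:
  assumes "d \<ge> 2" and "K \<noteq> {}" and chain: "subset.chain {C. good_lam d C} K"
  shows "good_lam d (\<Inter>K)"
proof -
  have "subset.chain (Collect lamination) K"
    using chain unfolding subset_chain_def good_lam_def by blast
  then have "lamination (\<Inter>K)" by (rule lamination_Inter_chain[OF \<open>K \<noteq> {}\<close>])
  have "subset.chain {C. lamination C \<and> sibling_invariant d C} K"
    using chain unfolding subset_chain_def good_lam_def by blast
  then have "sibling_invariant d (\<Inter>K)"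
    using \<open>d \<ge> 2\<close> \<open>K \<noteq> {}\<close> by (intro sibling_invariant_Inter_chain) auto
  moreover have "nonempty_lam (\<Inter>K)" using assms by (rule nonempty_lam_Inter_chain)
  ultimately show ?thesis using \<open>lamination (\<Inter>K)\<close> unfolding good_lam_def by blast
qed

theorem lemmal:
  fixes d :: nat and L :: "complex set set"
  assumes "d \<ge> 2" and "good_lam d L"
  shows "\<exists>C. is_chief d L C"
proof -
  have "\<exists>C\<in>{C. C \<subseteq> L \<and> good_lam d C}. \<forall>C'\<in>{C. C \<subseteq> L \<and> good_lam d C}. C' \<subseteq> C \<longrightarrow> C' = C"
  proof (rule subset_Zorn_Inter)
    show "{C. C \<subseteq> L \<and> good_lam d C} \<noteq> {}" using assms(2) by blast
  next
    fix \<C> assume "\<C> \<noteq> {}" and chain: "subset.chain {C. C \<subseteq> L \<and> good_lam d C} \<C>"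
    then have "subset.chain {C. good_lam d C} \<C>" unfolding subset_chain_def by blast
    then have "good_lam d (\<Inter>\<C>)" by (rule good_lam_Inter_chain[OF assms(1) \<open>\<C> \<noteq> {}\<close>])
    moreover have "\<Inter>\<C> \<subseteq> L" using chain \<open>\<C> \<noteq> {}\<close> unfolding subset_chain_def by blast
    ultimately show "\<Inter>\<C> \<in> {C. C \<subseteq> L \<and> good_lam d C}" by simp
  qed
  then obtain C where "C \<subseteq> L" "good_lam d C" "\<And>C'. C' \<subseteq> C \<Longrightarrow> good_lam d C' \<Longrightarrow> C' = C"
    by auto
  then have "is_chief d L C" unfolding is_chief_def by blast
  then show ?thesis ..
qed

end
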